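(* Consider Funding Games with $n$ players and $m$ items under the Highest Ratio Greedy (HRG) mechanism. Let $\mathbf{v}=(v_1,\dots,v_n)$ and $\mathbf{w}=(w_1,\dots,w_n)$ be any two valuation profiles, let $OPT^{\mathbf{v}}=(o_1,\dots,o_n)$ be an allocation maximizing $\sum_i v_i(X_i)$ over all allocations with $\sum_i X_i\le m$, and let $O(\mathbf{v})$ be the strategy profile in which each player $i$ makes the request $o_i^{req}=(o_i, v_i(o_i))$. Then for every strategy profile $\mathbf{s}$ that is valid with respect to both $\mathbf{v}$ and $\mathbf{w}$, $$\sum_{i=1}^n u_i(v_i; o_i^{req}, \mathbf{s}_{-i}) \;\ge\; sw(\mathbf{v}; O(\mathbf{v})) - sw(\mathbf{w}; \mathbf{s}),$$ i.e. the Funding Game is $(1,1)$-smooth with respect to the choice function $O$ and the social welfare objective.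
   Context: A (single-round) Funding Game has players $1,\dots,n$, $m$ identical items, and for each player $i$ a valuation function $v_i:\{0,\dots,m\}\to\mathbb{R}_{\ge 0}$ with $v_i(0)=0$, nondecreasing, and with diminishing marginal returns: $v_i(x)-v_i(x-1)\ge v_i(x+1)-v_i(x)$. A strategy (request) of player $i$ is a pair $(x_i,\tilde v_i)$ with $x_i\in\{0,\dots,m\}$ and reported value $\tilde v_i\ge 0$; it is valid with respect to $v_i$ if $\tilde v_i\le v_i(x_i)$. A strategy profile $\mathbf{s}$ is valid with respect to a valuation profile if every request is valid for the corresponding valuation. The HRG mechanism considers requests in descending order of the ratio $\tilde v_i/x_i$, breaking ties in favor of the player with lower index, and grants to each request in turn $\min(x_i, \text{number of items still available})$ items (requests with $x_i=0$ receive nothing); $X_i(\mathbf{s})$ denotes the number of items player $i$ receives. The payoff is $u_i(v_i;\mathbf{s})=v_i(X_i(\mathbf{s}))$, and for a valuation profile $\mathbf{w}$, $sw(\mathbf{w};\mathbf{s})=\sum_i w_i(X_i(\mathbf{s}))$. $(s_i',\mathbf{s}_{-i})$ denotes $\mathbf{s}$ with player $i$'s strategy replaced by $s_i'$. *)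

theory Defs
  imports Main Complex_Main "HOL-Library.Product_Lexorder"
begin

text \<open>Players are 0,...,n-1 (index order = the paper's order 1..n). A strategy profile
  assigns to each player i a request (x_i, reported value). A valuation profile assigns
  to each player a function nat => real; only its values on {0..m} matter.\<close>

type_synonym profile = "nat \<Rightarrow> nat \<times> real"
type_synonym valprofile = "nat \<Rightarrow> nat \<Rightarrow> real"

definition valuation :: "nat \<Rightarrow> (nat \<Rightarrow> real) \<Rightarrow> bool" where
  "valuation m f \<longleftrightarrow> f 0 = 0 \<and> (\<forall>x\<le>m. f x \<ge> 0)
     \<and> (\<forall>x<m. f x \<le> f (Suc x))
     \<and> (\<forall>x. 1 \<le> x \<and> x < m \<longrightarrow> f x - f (x - 1) \<ge> f (Suc x) - f x)"

definition valid_request :: "nat \<Rightarrow> (nat \<Rightarrow> real) \<Rightarrow> nat \<times> real \<Rightarrow> bool" where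
  "valid_request m f r \<longleftrightarrow> fst r \<le> m \<and> 0 \<le> snd r \<and> snd r \<le> f (fst r)"

definition valid_profile :: "nat \<Rightarrow> nat \<Rightarrow> valprofile \<Rightarrow> profile \<Rightarrow> bool" where
  "valid_profile n m v s \<longleftrightarrow> (\<forall>i<n. valid_request m (v i) (s i))"

text \<open>Ratio of a request (requests with x = 0 receive nothing regardless of position).\<close>
definition ratio :: "profile \<Rightarrow> nat \<Rightarrow> real" where
  "ratio s i = snd (s i) / real (fst (s i))"

definition hrg_order :: "nat \<Rightarrow> profile \<Rightarrow> nat list" where
  "hrg_order n s = sort_key (\<lambda>i. (- ratio s i, i)) [0..<n]"

fun grant :: "profile \<Rightarrow> nat \<Rightarrow> nat list \<Rightarrow> nat \<Rightarrow> nat" where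
  "grant s r [] = (\<lambda>_. 0)"
| "grant s r (i # is) = (let g = min (fst (s i)) r in (grant s (r - g) is)(i := g))"

definition HRG :: "nat \<Rightarrow> nat \<Rightarrow> profile \<Rightarrow> nat \<Rightarrow> nat" where
  "HRG n m s = grant s m (hrg_order n s)"

definition sw :: "nat \<Rightarrow> nat \<Rightarrow> valprofile \<Rightarrow> profile \<Rightarrow> real" where
  "sw n m w s = (\<Sum>i<n. w i (HRG n m s i))"

definition is_opt_alloc :: "nat \<Rightarrow> nat \<Rightarrow> valprofile \<Rightarrow> (nat \<Rightarrow> nat) \<Rightarrow> bool" where
  "is_opt_alloc n m v opt \<longleftrightarrow> (\<Sum>i<n. opt i) \<le> m \<and>
     (\<forall>X. (\<Sum>i<n. X i) \<le> m \<longrightarrow> (\<Sum>i<n. v i (X i)) \<le> (\<Sum>i<n. v i (opt i)))"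

definition O_profile :: "valprofile \<Rightarrow> (nat \<Rightarrow> nat) \<Rightarrow> profile" where
  "O_profile v opt = (\<lambda>i. (opt i, v i (opt i)))"

end

theory Submission
  imports Defs
begin

text \<open>
  Write \<open>X'\<^sub>i\<close> for what player i gets after deviating to
  its optimal request \<open>(o\<^sub>i, v\<^sub>i(o\<^sub>i))\<close> of ratio \<open>\<rho>\<^sub>i\<close>, \<open>Y\<^sub>j\<close> for the allocation under \<open>s\<close> and
  \<open>r\<^sub>j\<close> for the ratio of \<open>s\<^sub>j\<close>.  Diminishing returns make \<open>f(x)/x\<close> nonincreasing, hence
  \<open>v\<^sub>i(X'\<^sub>i) \<ge> X'\<^sub>i \<rho>\<^sub>i\<close> and \<open>w\<^sub>j(Y\<^sub>j) \<ge> Y\<^sub>j r\<^sub>j\<close>; moreover under \<open>O(v)\<close> everybody receives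
  exactly \<open>o\<^sub>i\<close>, so \<open>sw(v; O(v)) = \<Sum> o\<^sub>i \<rho>\<^sub>i\<close>.  It remains to bound the loss
  \<open>\<Sum> (o\<^sub>i - X'\<^sub>i) \<rho>\<^sub>i\<close> by \<open>\<Sum> Y\<^sub>j r\<^sub>j\<close>.  Take the player k of largest \<open>\<rho>\<^sub>k\<close> among those with
  \<open>X'\<^sub>k < o\<^sub>k\<close>: the total loss is at most \<open>(m - X'\<^sub>k) \<rho>\<^sub>k\<close>, and since k was cut short, all
  \<open>m - X'\<^sub>k\<close> missing items went under \<open>s\<close> to players processed before k, whose ratio is
  at least \<open>\<rho>\<^sub>k\<close>.
\<close>

section \<open>Concave valuations\<close>

lemma valuation_marginal_le_average:
  assumes "valuation m f" "Suc k \<le> m"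
  shows "real k * (f (Suc k) - f k) \<le> f k"
  using assms(2)
proof (induction k)
  case 0
  then show ?case using assms(1) by (simp add: valuation_def)
next
  case (Suc k)
  have IH: "real k * (f (Suc k) - f k) \<le> f k" using Suc by simp
  have dim: "f (Suc (Suc k)) - f (Suc k) \<le> f (Suc k) - f k"
    using assms(1) Suc.prems unfolding valuation_def by (metis Suc_le_eq diff_Suc_1 le_add1 plus_1_eq_Suc)
  have "real (Suc k) * (f (Suc (Suc k)) - f (Suc k)) \<le> real (Suc k) * (f (Suc k) - f k)"
    using dim by (intro mult_left_mono) auto
  also have "\<dots> \<le> f (Suc k)" using IH by (simp add: algebra_simps)
  finally show ?case .
qed

text \<open>The average value \<open>f(x)/x\<close> is nonincreasing on \<open>{1..m}\<close>, written without division.\<close>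
lemma valuation_average_antimono:
  assumes "valuation m f" "X \<le> x" "x \<le> m"
  shows "real X * f x \<le> real x * f X"
  using assms(2,3)
proof (induction x)
  case 0
  then show ?case by simp
next
  case (Suc x)
  show ?case
  proof (cases "X = Suc x \<or> X = 0")
    case True
    then show ?thesis using assms(1) by (auto simp: valuation_def)
  next
    case False
    then have Xx: "X \<le> x" and X0: "X > 0" using Suc.prems by auto
    have IH: "real X * f x \<le> real x * f X" using Suc Xx by simp
    have step: "real x * f (Suc x) \<le> real (Suc x) * f x"
      using valuation_marginal_le_average[OF assms(1)] Suc.prems by (simp add: algebra_simps)
    have "real x * (real X * f (Suc x)) \<le> real X * (real (Suc x) * f x)"
      using mult_left_mono[OF step, of "real X"] by (simp add: algebra_simps)
    also have "\<dots> \<le> real x * (real (Suc x) * f X)"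
      using mult_left_mono[OF IH, of "real (Suc x)"] by (simp add: algebra_simps)
    finally show ?thesis using Xx X0 by (simp add: mult_left_le_imp_le)
  qed
qed

lemma valid_request_ratio_bound:
  assumes "valuation m f" "valid_request m f r" "X \<le> fst r"
  shows "real X * (snd r / real (fst r)) \<le> f X"
proof (cases "fst r = 0")
  case True
  then show ?thesis using assms(1,3) by (simp add: valuation_def)
next
  case False
  have "real X * snd r \<le> real X * f (fst r)"
    using assms(2) by (intro mult_left_mono) (auto simp: valid_request_def)
  also have "\<dots> \<le> real (fst r) * f X"
    using valuation_average_antimono[OF assms(1,3)] assms(2) by (simp add: valid_request_def)
  finally show ?thesis using False by (simp add: field_simps)
qed

section \<open>Greedy granting along a list\<close>

lemma grant_le_request: "grant s r L j \<le> fst (s j)"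
  by (induction L arbitrary: r) (auto simp: Let_def)

lemma grant_append_left:
  "distinct (L1 @ L2) \<Longrightarrow> j \<in> set L1 \<Longrightarrow> grant s r (L1 @ L2) j = grant s r L1 j"
  by (induction L1 arbitrary: r) (auto simp: Let_def)

lemma grant_append_right:
  assumes "distinct (L1 @ L2)" "j \<in> set L2"
  shows "grant s r (L1 @ L2) j = grant s (r - min r (\<Sum>i\<in>set L1. fst (s i))) L2 j"
  using assms
proof (induction L1 arbitrary: r)
  case Nil
  then show ?case by simp
next
  case (Cons a L1)
  define g where "g = min (fst (s a)) r"
  have "grant s r ((a # L1) @ L2) j = grant s (r - g) (L1 @ L2) j"
    using Cons.prems by (auto simp: Let_def g_def)
  also have "\<dots> = grant s (r - g - min (r - g) (\<Sum>i\<in>set L1. fst (s i))) L2 j"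
    using Cons by simp
  also have "r - g - min (r - g) (\<Sum>i\<in>set L1. fst (s i)) = r - min r (\<Sum>i\<in>set (a # L1). fst (s i))"
    using Cons.prems by (auto simp: g_def)
  finally show ?case .
qed

lemma grant_total:
  "distinct L \<Longrightarrow> (\<Sum>j\<in>set L. grant s r L j) = min r (\<Sum>j\<in>set L. fst (s j))"
proof (induction L arbitrary: r)
  case Nil
  then show ?case by simp
next
  case (Cons a L)
  define g where "g = min (fst (s a)) r"
  have aL: "a \<notin> set L" using Cons.prems by simp
  have "(\<Sum>j\<in>set L. ((grant s (r - g) L)(a := g)) j) = (\<Sum>j\<in>set L. grant s (r - g) L j)"
    using aL by (intro sum.cong) auto
  then have "(\<Sum>j\<in>set (a # L). grant s r (a # L) j) = g + (\<Sum>j\<in>set L. grant s (r - g) L j)"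
    using aL by (simp add: Let_def g_def)
  also have "\<dots> = g + min (r - g) (\<Sum>j\<in>set L. fst (s j))" using Cons by simp
  also have "\<dots> = min r (\<Sum>j\<in>set (a # L). fst (s j))" using aL by (auto simp: g_def)
  finally show ?case .
qed

section \<open>The HRG processing order\<close>

definition hrg_key :: "profile \<Rightarrow> nat \<Rightarrow> real \<times> nat" where
  "hrg_key s j = (- ratio s j, j)"

definition ahead :: "nat \<Rightarrow> profile \<Rightarrow> real \<times> nat \<Rightarrow> nat set" where
  "ahead n s k = {j. j < n \<and> hrg_key s j < k}"

lemma hrg_order_set: "distinct (hrg_order n s)" "set (hrg_order n s) = {..<n}"
  by (auto simp: hrg_order_def)

lemma hrg_order_strictly_sorted: "sorted_wrt (<) (map (hrg_key s) (hrg_order n s))"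
proof -
  have eq: "hrg_order n s = sort_key (hrg_key s) [0..<n]"
    by (simp add: hrg_order_def hrg_key_def[abs_def])
  have "distinct (map (hrg_key s) (hrg_order n s))"
    using hrg_order_set(1) by (simp add: distinct_map inj_on_def hrg_key_def)
  then show ?thesis by (simp add: eq strict_sorted_iff)
qed

lemma HRG_le_request: "HRG n m s j \<le> fst (s j)"
  by (simp add: HRG_def grant_le_request)

lemma HRG_deviation_le_request: "HRG n m (s(i := r)) i \<le> fst r"
  using HRG_le_request[of n m "s(i := r)" i] by simp

lemma HRG_total: "(\<Sum>j<n. HRG n m s j) = min m (\<Sum>j<n. fst (s j))"
  using grant_total[OF hrg_order_set(1), of s m n] by (simp add: HRG_def hrg_order_set(2))

lemma takeWhile_sorted_set:
  "sorted (map f L) \<Longrightarrow> set (takeWhile (\<lambda>x. f x < k) L) = {x \<in> set L. f x < k}"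
proof (induction L)
  case Nil
  then show ?case by simp
next
  case (Cons a L)
  then show ?case by (auto simp: not_less dest: order.trans)
qed

text \<open>The players ahead of any key form a prefix of the processing order, so together
  they receive as much as they request, up to supply.\<close>
lemma HRG_ahead_total:
  "(\<Sum>j\<in>ahead n s k. HRG n m s j) = min m (\<Sum>j\<in>ahead n s k. fst (s j))"
proof -
  define L where "L = hrg_order n s"
  define L1 where "L1 = takeWhile (\<lambda>j. hrg_key s j < k) L"
  define L2 where "L2 = dropWhile (\<lambda>j. hrg_key s j < k) L"
  have split: "L = L1 @ L2" by (simp add: L1_def L2_def)
  have dist: "distinct (L1 @ L2)" using hrg_order_set(1)[of n s] split by (simp add: L_def)
  have "set L1 = ahead n s k"
    using takeWhile_sorted_set[of "hrg_key s" L k] hrg_order_strictly_sorted[of s n]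
    by (simp add: L1_def L_def hrg_order_set(2) ahead_def strict_sorted_iff)
  moreover have "\<And>j. j \<in> set L1 \<Longrightarrow> HRG n m s j = grant s m L1 j"
    using grant_append_left[OF dist] by (simp add: HRG_def L_def[symmetric] split)
  ultimately show ?thesis using grant_total dist by (metis distinct_append sum.cong)
qed

lemma HRG_player:
  assumes "i < n"
  shows "HRG n m s i = min (fst (s i)) (m - min m (\<Sum>j\<in>ahead n s (hrg_key s i). fst (s j)))"
proof -
  define L where "L = hrg_order n s"
  obtain P Q where PQ: "L = P @ i # Q"
    using assms hrg_order_set(2) by (metis L_def lessThan_iff split_list)
  have dist: "distinct (P @ i # Q)" using hrg_order_set(1)[of n s] PQ by (simp add: L_def)
  have sorted: "sorted_wrt (<) (map (hrg_key s) (P @ i # Q))"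
    using hrg_order_strictly_sorted PQ by (metis L_def)
  have "set P = ahead n s (hrg_key s i)"
  proof
    show "set P \<subseteq> ahead n s (hrg_key s i)"
      using sorted PQ hrg_order_set(2)[of n s]
      by (auto simp: ahead_def sorted_wrt_append L_def)
    show "ahead n s (hrg_key s i) \<subseteq> set P"
      using sorted PQ hrg_order_set(2)[of n s]
      by (auto simp: ahead_def sorted_wrt_append L_def dest: less_asym)
  qed
  then show ?thesis
    using grant_append_right[OF dist, of i s m]
    by (simp add: HRG_def L_def[symmetric] PQ Let_def)
qed

lemma HRG_feasible_requests:
  assumes "(\<Sum>j<n. fst (s j)) \<le> m" "i < n"
  shows "HRG n m s i = fst (s i)"
proof (rule ccontr)
  assume "HRG n m s i \<noteq> fst (s i)"
  then have "HRG n m s i < fst (s i)" using HRG_le_request[of n m s i] by simp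
  then have "(\<Sum>j<n. HRG n m s j) < (\<Sum>j<n. fst (s j))"
    using assms(2) HRG_le_request by (intro sum_strict_mono_ex1) auto
  then show False using HRG_total[of n m s] assms(1) by simp
qed

lemma HRG_cut_short:
  assumes "i < n" "HRG n m (s(i := q)) i < fst q"
  shows "real m - real (HRG n m (s(i := q)) i)
           \<le> (\<Sum>j\<in>{j. j < n \<and> snd q / real (fst q) \<le> ratio s j}. real (HRG n m s j))"
proof -
  define s' where "s' = s(i := q)"
  define k where "k = hrg_key s' i"
  have same: "hrg_key s' j = hrg_key s j" "s' j = s j" if "j \<noteq> i" for j
    using that by (auto simp: s'_def hrg_key_def ratio_def)
  have not_ahead: "i \<notin> ahead n s' k" by (simp add: ahead_def k_def)
  have sub: "ahead n s' k \<subseteq> ahead n s k"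
  proof
    fix j assume "j \<in> ahead n s' k"
    moreover then have "j \<noteq> i" using not_ahead by blast
    ultimately show "j \<in> ahead n s k" using same(1) by (simp add: ahead_def)
  qed
  have "(\<Sum>j\<in>ahead n s' k. fst (s' j)) = (\<Sum>j\<in>ahead n s' k. fst (s j))"
    using same(2) not_ahead by (intro sum.cong) (auto, metis)
  moreover have "HRG n m s' i = m - min m (\<Sum>j\<in>ahead n s' k. fst (s' j))"
    using HRG_player[OF assms(1), of m s'] assms(2) by (auto simp: s'_def k_def)
  moreover have "(\<Sum>j\<in>ahead n s' k. fst (s j)) \<le> (\<Sum>j\<in>ahead n s k. fst (s j))"
    using sub by (intro sum_mono2) (auto simp: ahead_def)
  ultimately have "m - HRG n m s' i \<le> (\<Sum>j\<in>ahead n s k. HRG n m s j)"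
    using HRG_ahead_total[of n m s k] by linarith
  then have "real m - real (HRG n m s' i) \<le> (\<Sum>j\<in>ahead n s k. real (HRG n m s j))"
    by (simp add: of_nat_diff flip: of_nat_sum)
  also have "\<dots> \<le> (\<Sum>j\<in>{j. j < n \<and> snd q / real (fst q) \<le> ratio s j}. real (HRG n m s j))"
    by (intro sum_mono2)
       (auto simp: ahead_def k_def hrg_key_def s'_def ratio_def less_prod_def)
  finally show ?thesis by (simp add: s'_def)
qed

lemma sum_weighted_le_max:
  fixes a g :: "'a \<Rightarrow> real"
  assumes "\<And>i. i \<in> A \<Longrightarrow> a i \<ge> 0" "\<And>i. i \<in> A \<Longrightarrow> a i > 0 \<Longrightarrow> g i \<le> c"
  shows "(\<Sum>i\<in>A. a i * g i) \<le> (\<Sum>i\<in>A. a i) * c"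
  unfolding sum_distrib_right
proof (intro sum_mono)
  fix i assume "i \<in> A"
  then show "a i * g i \<le> a i * c"
    using assms[of i] by (cases "a i = 0") (auto intro: mult_left_mono)
qed

lemma deviation_loss_bound:
  fixes q :: profile
  assumes fit: "(\<Sum>i<n. fst (q i)) \<le> m"
    and q_nonneg: "\<forall>i<n. 0 \<le> snd (q i)" and s_nonneg: "\<forall>j<n. 0 \<le> snd (s j)"
  shows "(\<Sum>i<n. (real (fst (q i)) - real (HRG n m (s(i := q i)) i)) * ratio q i)
           \<le> (\<Sum>j<n. real (HRG n m s j) * ratio s j)"
    (is "(\<Sum>i<n. ?a i * _) \<le> ?gain")
proof -
  have a_nonneg: "?a i \<ge> 0" for i
    using HRG_deviation_le_request[of n m s i "q i"] by simp
  have ratio_nonneg: "ratio q i \<ge> 0" "ratio s i \<ge> 0" if "i < n" for i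
    using q_nonneg s_nonneg that by (simp_all add: ratio_def)
  have gain_nonneg: "?gain \<ge> 0" using ratio_nonneg(2) by (intro sum_nonneg) auto
  define I where "I = {i. i < n \<and> ?a i > 0}"
  show ?thesis
  proof (cases "I = {}")
    case True
    then have "?a i = 0" if "i < n" for i
      using a_nonneg[of i] that unfolding I_def by (metis (mono_tags, lifting) empty_Collect_eq order_le_less)
    then show ?thesis using gain_nonneg by simp
  next
    case False
    have fin: "finite (ratio q ` I)" by (simp add: I_def)
    obtain k where kI: "k \<in> I" and k_is_max: "ratio q k = Max (ratio q ` I)"
      using Max_in[OF fin] False by (metis image_iff image_is_empty)
    have k_max: "ratio q i \<le> ratio q k" if "i \<in> I" for i
      using Max_ge[OF fin] that k_is_max by simp
    have kn: "k < n" and cut: "HRG n m (s(k := q k)) k < fst (q k)" using kI by (auto simp: I_def)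
    define J where "J = {j. j < n \<and> ratio q k \<le> ratio s j}"
    have "(\<Sum>i<n. ?a i * ratio q i) \<le> (\<Sum>i<n. ?a i) * ratio q k"
      using a_nonneg k_max by (intro sum_weighted_le_max) (auto simp: I_def)
    also have "\<dots> \<le> (real m - real (HRG n m (s(k := q k)) k)) * ratio q k"
    proof (intro mult_right_mono)
      have "(\<Sum>i<n. ?a i) \<le> (\<Sum>i<n. real (fst (q i))) - real (HRG n m (s(k := q k)) k)"
        using kn member_le_sum[of k "{..<n}" "\<lambda>i. real (HRG n m (s(i := q i)) i)"]
        by (simp add: sum_subtractf)
      then show "(\<Sum>i<n. ?a i) \<le> real m - real (HRG n m (s(k := q k)) k)"
        using fit by (simp flip: of_nat_sum)
    qed (use ratio_nonneg kn in auto)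
    also have "\<dots> \<le> (\<Sum>j\<in>J. real (HRG n m s j)) * ratio q k"
      using HRG_cut_short[OF kn cut] ratio_nonneg(1)[OF kn]
      by (intro mult_right_mono) (simp_all add: J_def ratio_def)
    also have "\<dots> \<le> (\<Sum>j\<in>J. real (HRG n m s j) * ratio s j)"
      unfolding sum_distrib_right J_def by (intro sum_mono mult_left_mono) auto
    also have "\<dots> \<le> ?gain"
      using ratio_nonneg(2) by (intro sum_mono2) (auto simp: J_def)
    finally show ?thesis .
  qed
qed

lemma sw_ge_reported:
  assumes "\<forall>j<n. valuation m (w j)" "valid_profile n m w s"
  shows "(\<Sum>j<n. real (HRG n m s j) * ratio s j) \<le> sw n m w s"
  unfolding sw_def ratio_def using assms
  by (intro sum_mono valid_request_ratio_bound[where m = m])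
     (auto simp: valid_profile_def HRG_le_request)

text \<open>The optimal profile is feasible, so it realizes the optimal welfare, which is the
  sum of quantity times ratio of the truthful optimal requests.\<close>
lemma sw_O_profile:
  assumes "\<forall>i<n. valuation m (v i)" "is_opt_alloc n m v opt"
  shows "sw n m v (O_profile v opt) = (\<Sum>i<n. real (opt i) * ratio (O_profile v opt) i)"
  unfolding sw_def
proof (intro sum.cong refl)
  fix i assume "i \<in> {..<n}"
  moreover have "(\<Sum>j<n. fst (O_profile v opt j)) \<le> m"
    using assms(2) by (simp add: is_opt_alloc_def O_profile_def)
  ultimately have "HRG n m (O_profile v opt) i = opt i"
    using HRG_feasible_requests by (simp add: O_profile_def)
  then show "v i (HRG n m (O_profile v opt) i) = real (opt i) * ratio (O_profile v opt) i"
    using assms(1) \<open>i \<in> {..<n}\<close> by (simp add: ratio_def O_profile_def valuation_def)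
qed

theorem mainTheorem1:
  fixes n m :: nat and v w :: valprofile and opt :: "nat \<Rightarrow> nat" and s :: profile
  assumes "\<forall>i<n. valuation m (v i)"
    and "\<forall>i<n. valuation m (w i)"
    and "is_opt_alloc n m v opt"
    and "valid_profile n m v s"
    and "valid_profile n m w s"
  shows "(\<Sum>i<n. v i (HRG n m (s(i := (opt i, v i (opt i)))) i))
           \<ge> sw n m v (O_profile v opt) - sw n m w s"
proof -
  define q where "q = O_profile v opt"
  define X' where "X' i = HRG n m (s(i := q i)) i" for i
  have fit: "(\<Sum>i<n. fst (q i)) \<le> m"
    using assms(3) by (simp add: is_opt_alloc_def q_def O_profile_def)
  then have q_valid: "valid_request m (v i) (q i)" if "i < n" for i
    using assms(1) that member_le_sum[of i "{..<n}" "\<lambda>i. fst (q i)"]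
    by (auto simp: valid_request_def valuation_def q_def O_profile_def)
  have payoff: "(\<Sum>i<n. real (X' i) * ratio q i) \<le> (\<Sum>i<n. v i (X' i))"
    unfolding ratio_def X'_def using assms(1) q_valid
    by (intro sum_mono valid_request_ratio_bound[where m = m])
       (auto intro: HRG_deviation_le_request)
  have loss: "(\<Sum>i<n. (real (fst (q i)) - real (X' i)) * ratio q i)
                \<le> (\<Sum>j<n. real (HRG n m s j) * ratio s j)"
    using deviation_loss_bound[OF fit] q_valid assms(4)
    by (simp add: X'_def valid_request_def valid_profile_def)
  have "sw n m v q = (\<Sum>i<n. real (fst (q i)) * ratio q i)"
    using sw_O_profile[OF assms(1,3)] by (simp add: q_def O_profile_def)
  then show ?thesis
    using payoff loss sw_ge_reported[OF assms(2,5)]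
    by (simp add: X'_def q_def O_profile_def left_diff_distrib sum_subtractf)
qed

end
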